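(* Let $T$ be a tree with maximum degree $3$ on $n \geq 7$ vertices. Then $GRM_{-2}(T) \geq -\left\lfloor \frac{n-1}{3} \right\rfloor - 2$.
   Context: For a graph $G=(V,E)$ and a real $\lambda$, the general reduced second Zagreb index is $GRM_\lambda(G) = \sum_{uv \in E} (\deg(u)+\lambda)(\deg(v)+\lambda)$, where $\deg(v)$ is the degree of $v$. *)

theory Defs
  imports Complex_Main
begin

definition simple_graph :: "'a set \<Rightarrow> 'a set set \<Rightarrow> bool" where
  "simple_graph V E \<longleftrightarrow> finite V \<and> (\<forall>e\<in>E. e \<subseteq> V \<and> card e = 2)"

definition adj :: "'a set set \<Rightarrow> 'a \<Rightarrow> 'a \<Rightarrow> bool" where
  "adj E u v \<longleftrightarrow> {u, v} \<in> E"

definition degree :: "'a set set \<Rightarrow> 'a \<Rightarrow> nat" where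
  "degree E v = card {e \<in> E. v \<in> e}"

definition max_degree :: "'a set \<Rightarrow> 'a set set \<Rightarrow> nat" where
  "max_degree V E = Max (degree E ` V)"

definition connected_graph :: "'a set \<Rightarrow> 'a set set \<Rightarrow> bool" where
  "connected_graph V E \<longleftrightarrow> (\<forall>u\<in>V. \<forall>v\<in>V. (u, v) \<in> {(x, y). adj E x y}\<^sup>*)"

definition is_cycle :: "'a set set \<Rightarrow> 'a list \<Rightarrow> bool" where
  "is_cycle E cs \<longleftrightarrow> length cs \<ge> 3 \<and> distinct cs
     \<and> (\<forall>i. Suc i < length cs \<longrightarrow> adj E (cs ! i) (cs ! Suc i))
     \<and> adj E (last cs) (hd cs)"

definition acyclic_graph :: "'a set set \<Rightarrow> bool" where
  "acyclic_graph E \<longleftrightarrow> \<not> (\<exists>cs. is_cycle E cs)"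

definition is_tree :: "'a set \<Rightarrow> 'a set set \<Rightarrow> bool" where
  "is_tree V E \<longleftrightarrow> simple_graph V E \<and> V \<noteq> {} \<and> connected_graph V E \<and> acyclic_graph E"

definition GRM :: "real \<Rightarrow> 'a set set \<Rightarrow> real" where
  "GRM lam E = (\<Sum>e\<in>E. \<Prod>v\<in>e. real (degree E v) + lam)"

end

theory Submission
  imports Defs
begin

text \<open>
  Put \<open>\<phi>(d) = (d - 2) / d\<close>. For degrees \<open>a, b \<in> {1, 2, 3}\<close> one checks
  \<open>3 (a - 2) (b - 2) + 1 \<ge> 3 (\<phi>(a) + \<phi>(b))\<close>. Summing over the \<open>m\<close> edges, the right-hand
  side counts every vertex \<open>v\<close> exactly \<open>deg v\<close> times, and \<open>deg v \<cdot> \<phi>(deg v) = deg v - 2\<close>,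
  so it equals \<open>3 (2m - 2n)\<close> by the handshake lemma. Hence \<open>3 GRM\<^sub>-\<^sub>2 \<ge> 5m - 6n\<close>, and
  \<open>m \<ge> n - 1\<close> for a connected graph gives \<open>3 GRM\<^sub>-\<^sub>2 \<ge> -n - 5\<close>; since \<open>GRM\<^sub>-\<^sub>2\<close> is an
  integer, the floor follows.
\<close>

lemma simple_graph_finite_edges:
  assumes "simple_graph V E"
  shows "finite E"
proof -
  have "E \<subseteq> Pow V" and "finite V"
    using assms unfolding simple_graph_def by auto
  then show ?thesis by (meson finite_Pow_iff rev_finite_subset)
qed

lemma degree_le_max_degree:
  assumes "finite V" and "v \<in> V"
  shows "degree E v \<le> max_degree V E"
  unfolding max_degree_def using assms by simp

lemma degree_ge_one_if_in_edge:
  assumes "finite E" and "e \<in> E" and "v \<in> e"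
  shows "degree E v \<ge> 1"
proof -
  have "{e \<in> E. v \<in> e} \<noteq> {}" using assms(2,3) by blast
  then show ?thesis unfolding degree_def using assms(1) by (simp add: Suc_le_eq card_gt_0_iff)
qed

definition walk_dist :: "'a set set \<Rightarrow> 'a \<Rightarrow> 'a \<Rightarrow> nat" where
  "walk_dist E u v = (LEAST k. (u, v) \<in> {(x, y). adj E x y} ^^ k)"

lemma connected_graph_closer_neighbour:
  assumes "connected_graph V E" and "r \<in> V" and "v \<in> V" and "v \<noteq> r"
  shows "\<exists>y. adj E v y \<and> walk_dist E y r < walk_dist E v r"
proof -
  define R where "R = {(x, y). adj E x y}"
  have "(v, r) \<in> R\<^sup>*"
    using assms unfolding connected_graph_def R_def by blast
  then have "\<exists>k. (v, r) \<in> R ^^ k" by (metis rtrancl_power)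
  then have walk: "(v, r) \<in> R ^^ walk_dist E v r"
    unfolding walk_dist_def R_def[symmetric] by (rule LeastI_ex)
  with \<open>v \<noteq> r\<close> obtain k where k: "walk_dist E v r = Suc k"
    by (cases "walk_dist E v r") auto
  with walk obtain y where "(v, y) \<in> R" and "(y, r) \<in> R ^^ k"
    by (metis relpow_Suc_D2)
  moreover from \<open>(y, r) \<in> R ^^ k\<close> have "walk_dist E y r \<le> k"
    unfolding walk_dist_def R_def[symmetric] by (rule Least_le)
  ultimately show ?thesis using k unfolding R_def by auto
qed

lemma connected_graph_card_edges_ge:
  assumes "simple_graph V E" and "connected_graph V E" and "V \<noteq> {}"
  shows "card V - 1 \<le> card E"
proof -
  obtain r where r: "r \<in> V" using assms(3) by blast
  define parent where "parent v = (SOME y. adj E v y \<and> walk_dist E y r < walk_dist E v r)" for v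
  have parent: "adj E v (parent v) \<and> walk_dist E (parent v) r < walk_dist E v r"
    if "v \<in> V - {r}" for v
  proof -
    have "\<exists>y. adj E v y \<and> walk_dist E y r < walk_dist E v r"
      using connected_graph_closer_neighbour[OF assms(2) r] that by blast
    then show ?thesis unfolding parent_def by (rule someI_ex)
  qed
  define up where "up v = {v, parent v}" for v
  have "up ` (V - {r}) \<subseteq> E"
    using parent unfolding up_def adj_def by auto
  moreover have "inj_on up (V - {r})"
  proof (rule inj_onI)
    fix u v assume u: "u \<in> V - {r}" and v: "v \<in> V - {r}" and "up u = up v"
    show "u = v"
    proof (rule ccontr)
      assume "u \<noteq> v"
      with \<open>up u = up v\<close> have "u = parent v" and "v = parent u"
        unfolding up_def by (auto simp: doubleton_eq_iff)
      then show False using parent[OF u] parent[OF v] by simp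
    qed
  qed
  ultimately have "card (V - {r}) \<le> card E"
    using card_inj_on_le simple_graph_finite_edges[OF assms(1)] by metis
  then show ?thesis using r by simp
qed

lemma sum_edges_sum_endpoints:
  fixes h :: "'a \<Rightarrow> 'b::comm_semiring_1"
  assumes "finite V" and "finite E" and "\<And>e. e \<in> E \<Longrightarrow> e \<subseteq> V"
  shows "(\<Sum>e\<in>E. \<Sum>v\<in>e. h v) = (\<Sum>v\<in>V. of_nat (degree E v) * h v)"
proof -
  have "(\<Sum>e\<in>E. \<Sum>v\<in>e. h v) = (\<Sum>e\<in>E. \<Sum>v\<in>V. if v \<in> e then h v else 0)"
  proof (rule sum.cong[OF refl])
    fix e assume "e \<in> E"
    then have "e = {v\<in>V. v \<in> e}" using assms(3) by auto
    then show "(\<Sum>v\<in>e. h v) = (\<Sum>v\<in>V. if v \<in> e then h v else 0)"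
      using sum.inter_filter[OF assms(1), of h "\<lambda>v. v \<in> e"] by simp
  qed
  also have "\<dots> = (\<Sum>v\<in>V. \<Sum>e\<in>E. if v \<in> e then h v else 0)"
    by (rule sum.swap)
  also have "\<dots> = (\<Sum>v\<in>V. of_nat (degree E v) * h v)"
    by (simp add: degree_def flip: sum.inter_filter[OF assms(2)])
  finally show ?thesis .
qed

lemma sum_degree_eq_twice_card_edges:
  assumes "simple_graph V E"
  shows "(\<Sum>v\<in>V. degree E v) = 2 * card E"
proof -
  have "finite V" and sub: "\<And>e. e \<in> E \<Longrightarrow> e \<subseteq> V" and two: "\<And>e. e \<in> E \<Longrightarrow> card e = 2"
    using assms unfolding simple_graph_def by auto
  have "(\<Sum>v\<in>V. degree E v) = (\<Sum>e\<in>E. \<Sum>v\<in>e. 1)"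
    using sum_edges_sum_endpoints[OF \<open>finite V\<close> simple_graph_finite_edges[OF assms] sub,
        where h = "\<lambda>_. 1::nat"] by simp
  also have "\<dots> = 2 * card E"
    using two by simp
  finally show ?thesis .
qed

lemma subcubic_edge_inequality:
  fixes a b :: nat
  assumes "a \<in> {1, 2, 3}" and "b \<in> {1, 2, 3}"
  shows "3 * ((real a - 2) / a + (real b - 2) / b) \<le> 3 * ((real a - 2) * (real b - 2)) + 1"
  using assms by auto

lemma GRM_minus_two_ge_subcubic:
  assumes "simple_graph V E" and "\<And>v. v \<in> V \<Longrightarrow> degree E v \<le> 3"
  shows "5 * real (card E) - 6 * real (card V) \<le> 3 * GRM (-2) E"
proof -
  have finV: "finite V" and sub: "\<And>e. e \<in> E \<Longrightarrow> e \<subseteq> V" and two: "\<And>e. e \<in> E \<Longrightarrow> card e = 2"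
    using assms(1) unfolding simple_graph_def by auto
  have finE: "finite E" using simple_graph_finite_edges[OF assms(1)] .
  define \<phi> where "\<phi> v = (real (degree E v) - 2) / degree E v" for v
  have edge: "3 * (\<Sum>v\<in>e. \<phi> v) \<le> 3 * (\<Prod>v\<in>e. real (degree E v) - 2) + 1" if "e \<in> E" for e
  proof -
    obtain u v where e: "e = {u, v}" "u \<noteq> v" using two[OF \<open>e \<in> E\<close>] by (meson card_2_iff)
    have "degree E w \<in> {1, 2, 3}" if "w \<in> e" for w
      using assms(2) degree_ge_one_if_in_edge[OF finE \<open>e \<in> E\<close> that] sub[OF \<open>e \<in> E\<close>] that by force
    with subcubic_edge_inequality show ?thesis unfolding \<phi>_def e using e by simp
  qed
  have "(\<Sum>v\<in>V. real (degree E v) - 2) \<le> (\<Sum>v\<in>V. real (degree E v) * \<phi> v)"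
    by (rule sum_mono) (simp add: \<phi>_def)
  also have "\<dots> = (\<Sum>e\<in>E. \<Sum>v\<in>e. \<phi> v)"
    using sum_edges_sum_endpoints[OF finV finE sub, where h = \<phi>] by simp
  finally have "3 * (\<Sum>v\<in>V. real (degree E v) - 2) \<le> 3 * (\<Sum>e\<in>E. \<Sum>v\<in>e. \<phi> v)"
    by simp
  also have "\<dots> = (\<Sum>e\<in>E. 3 * (\<Sum>v\<in>e. \<phi> v))"
    by (rule sum_distrib_left)
  also have "\<dots> \<le> (\<Sum>e\<in>E. 3 * (\<Prod>v\<in>e. real (degree E v) - 2) + 1)"
    using edge by (rule sum_mono)
  also have "\<dots> = 3 * GRM (-2) E + card E"
    by (simp add: GRM_def sum.distrib sum_distrib_left)
  finally show ?thesis
    using sum_degree_eq_twice_card_edges[OF assms(1)]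
    by (simp add: sum_subtractf flip: of_nat_sum)
qed

lemma GRM_minus_two_eq_of_int: "GRM (-2) E = of_int (\<Sum>e\<in>E. \<Prod>v\<in>e. int (degree E v) - 2)"
  unfolding GRM_def by (simp add: of_int_sum of_int_prod)

theorem theorem3p2:
  fixes V :: "'a set" and E :: "'a set set"
  assumes "is_tree V E"
    and "max_degree V E = 3"
    and "card V \<ge> 7"
  shows "GRM (-2) E \<ge> - real ((card V - 1) div 3) - 2"
proof -
  have sg: "simple_graph V E" and "connected_graph V E" and "V \<noteq> {}"
    using assms(1) unfolding is_tree_def by auto
  have "finite V" using sg unfolding simple_graph_def by blast
  then have "\<And>v. v \<in> V \<Longrightarrow> degree E v \<le> 3"
    using degree_le_max_degree assms(2) by metis
  then have "5 * real (card E) - 6 * real (card V) \<le> 3 * GRM (-2) E"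
    using GRM_minus_two_ge_subcubic sg by blast
  moreover have "real (card V) - 1 \<le> real (card E)"
    using connected_graph_card_edges_ge[OF sg \<open>connected_graph V E\<close> \<open>V \<noteq> {}\<close>] by linarith
  ultimately have "- int (card V) - 5 \<le> 3 * (\<Sum>e\<in>E. \<Prod>v\<in>e. int (degree E v) - 2)"
    unfolding GRM_minus_two_eq_of_int by linarith
  moreover have "int ((card V - 1) div 3) = (int (card V) - 1) div 3"
    using assms(3) by (simp add: zdiv_int of_nat_diff)
  ultimately have "- int ((card V - 1) div 3) - 2 \<le> (\<Sum>e\<in>E. \<Prod>v\<in>e. int (degree E v) - 2)"
    by linarith
  then have "real_of_int (- int ((card V - 1) div 3) - 2) \<le> real_of_int (\<Sum>e\<in>E. \<Prod>v\<in>e. int (degree E v) - 2)"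
    by (simp only: of_int_le_iff)
  then show ?thesis
    unfolding GRM_minus_two_eq_of_int by simp
qed

end
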